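(* Let $(X,m)$, $X=\{x_1,\ldots,x_n\}\subset\mathbb{R}^N$, be a central configuration with nonzero masses, exponent $a\neq0$, nonzero total mass $\mu_0$, and codimension $c$, and let $\lambda\in\mathbb{R}$ be such that $\sum_{i\neq j}m_iS_{ij}\overrightarrow{x_jx_i}=\overrightarrow{O}$ for all $j$, where $S_{ij}=s_{ij}^a-\lambda/\mu_0$ for $i\neq j$. Define $S_{jj}=-\frac{1}{m_j}\sum_{i\neq j}m_iS_{ij}$ and the vectors $C_j=(m_1S_{1j},\ldots,m_nS_{nj})\in\mathbb{R}^n$. Then for any $k,l\ge0$ with $k+l=c+1$, every $(c+1)\times(c+1)$ minor of any $n\times(c+1)$ matrix whose columns are $k$ of the vectors $C_j$ and $l$ vectors of $\mathbb{W}_0(X)$ vanishes. In particular, every $(c+1)\times(c+1)$ minor of the $n\times n$ matrix $(S_{ij})$ is zero.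
   Context: $s_{ij}=\overrightarrow{x_ix_j}^2$. A central configuration has accelerations $\overrightarrow{\gamma}_j=-\sum_{i\neq j}m_is_{ij}^a\overrightarrow{x_ix_j}$ such that, for some vector $\overrightarrow{\gamma}_O$, point $x_O$ and real $\lambda$, $\overrightarrow{\gamma}_j-\overrightarrow{\gamma}_O=\lambda\overrightarrow{x_Ox_j}$ for all $j$; for $\mu_0\neq0$ these equations take the form given in the claim. The codimension of $X$ is $(n-1)-d$ with $d$ the dimension of the affine hull of $X$. $\mathbb{W}_0(X)$ is the space of weight vectors $(w_i)$ with $\sum_iw_i\overrightarrow{px_i}=\overrightarrow{O}$ for all points $p$. *)

theory Defs
  imports "HOL-Analysis.Analysis"
begin

text \<open>Configurations: points x 0, ..., x (n-1) in a Euclidean space, masses m 0, ..., m (n-1).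
  Indices are shifted by one with respect to the paper (x_1..x_n).\<close>

definition sqd :: "(nat \<Rightarrow> 'a::euclidean_space) \<Rightarrow> nat \<Rightarrow> nat \<Rightarrow> real" where
  "sqd x i j = (norm (x j - x i))^2"

definition accel :: "nat \<Rightarrow> (nat \<Rightarrow> 'a::euclidean_space) \<Rightarrow> (nat \<Rightarrow> real) \<Rightarrow> real \<Rightarrow> nat \<Rightarrow> 'a" where
  "accel n x m a j = - (\<Sum>i\<in>{..<n} - {j}. (m i * sqd x i j powr a) *\<^sub>R (x j - x i))"

definition central_config :: "nat \<Rightarrow> (nat \<Rightarrow> 'a::euclidean_space) \<Rightarrow> (nat \<Rightarrow> real) \<Rightarrow> real \<Rightarrow> bool" where
  "central_config n x m a \<longleftrightarrow>
     (\<exists>\<gamma>O xO lam. \<forall>j<n. accel n x m a j - \<gamma>O = lam *\<^sub>R (x j - xO))"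

definition total_mass :: "nat \<Rightarrow> (nat \<Rightarrow> real) \<Rightarrow> real" where
  "total_mass n m = (\<Sum>i<n. m i)"

definition Soff :: "nat \<Rightarrow> (nat \<Rightarrow> 'a::euclidean_space) \<Rightarrow> (nat \<Rightarrow> real) \<Rightarrow> real \<Rightarrow> real \<Rightarrow> nat \<Rightarrow> nat \<Rightarrow> real" where
  "Soff n x m a lam i j = sqd x i j powr a - lam / total_mass n m"

definition Smat :: "nat \<Rightarrow> (nat \<Rightarrow> 'a::euclidean_space) \<Rightarrow> (nat \<Rightarrow> real) \<Rightarrow> real \<Rightarrow> real \<Rightarrow> nat \<Rightarrow> nat \<Rightarrow> real" where
  "Smat n x m a lam i j =
     (if i \<noteq> j then Soff n x m a lam i j
      else - (1 / m j) * (\<Sum>i'\<in>{..<n} - {j}. m i' * Soff n x m a lam i' j))"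

definition Cvec :: "nat \<Rightarrow> (nat \<Rightarrow> 'a::euclidean_space) \<Rightarrow> (nat \<Rightarrow> real) \<Rightarrow> real \<Rightarrow> real \<Rightarrow> nat \<Rightarrow> nat \<Rightarrow> real" where
  "Cvec n x m a lam j i = m i * Smat n x m a lam i j"

definition W0 :: "nat \<Rightarrow> (nat \<Rightarrow> 'a::euclidean_space) \<Rightarrow> (nat \<Rightarrow> real) set" where
  "W0 n x = {w. (\<forall>i\<ge>n. w i = 0) \<and> (\<forall>p. (\<Sum>i<n. w i *\<^sub>R (x i - p)) = 0)}"

definition det_nat :: "nat \<Rightarrow> (nat \<Rightarrow> nat \<Rightarrow> real) \<Rightarrow> real" where
  "det_nat k A = (\<Sum>p | p permutes {..<k}. of_int (sign p) * (\<Prod>s<k. A s (p s)))"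

end

theory Submission
  imports Defs "Jordan_Normal_Form.Determinant"
begin

text \<open>Each \<open>C\<^sub>j\<close> is an affine dependency of \<open>X\<close>, i.e. lies in \<open>W\<^sub>0(X)\<close>: its entries sum
  to zero by the choice of \<open>S\<^sub>j\<^sub>j\<close>, and its first moment about \<open>x\<^sub>j\<close> vanishes by the equations
  for \<open>\<lambda>\<close>. The space \<open>W\<^sub>0(X)\<close> has dimension \<open>c\<close>: an affine basis of \<open>X\<close> leaves out exactly
  \<open>c\<close> points, and a dependency vanishing at those points vanishes identically. Hence any
  \<open>c + 1\<close> vectors of \<open>W\<^sub>0(X)\<close> are linearly dependent, so every \<open>(c + 1)\<close>-minor of the matrix
  they form is zero. The minors of \<open>(S\<^sub>i\<^sub>j)\<close> differ from those of \<open>(m\<^sub>i S\<^sub>i\<^sub>j)\<close> only by the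
  nonzero row factors \<open>1/m\<^sub>i\<close>.\<close>

lemma det_nat_eq_det: "det_nat k A = det (mat k k (\<lambda>(s, t). A s t))"
  unfolding det_nat_def
  by (subst det_def'[of _ k]) (auto intro!: sum.cong prod.cong simp: atLeast0LessThan)

lemma det_nat_cong:
  assumes "\<And>s t. s < k \<Longrightarrow> t < k \<Longrightarrow> A s t = B s t"
  shows "det_nat k A = det_nat k B"
  unfolding det_nat_eq_det using assms by (intro arg_cong[where f = det] eq_matI) auto

lemma det_nat_scale_rows:
  "det_nat k (\<lambda>s t. f s * A s t) = (\<Prod>s<k. f s) * det_nat k A"
  unfolding det_nat_def sum_distrib_left prod.distrib by (simp add: ac_simps)

lemma det_nat_zero_row:
  assumes "r < k" "\<And>t. t < k \<Longrightarrow> A r t = 0"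
  shows "det_nat k A = 0"
  unfolding det_nat_def
proof (rule sum.neutral, safe)
  fix p assume "p permutes {..<k}"
  then have "p r < k" using assms(1) by (meson lessThan_iff permutes_in_image)
  then have "(\<Prod>s<k. A s (p s)) = 0" using assms by (intro prod_zero) auto
  then show "of_int (sign p) * (\<Prod>s<k. A s (p s)) = 0" by simp
qed

lemma det_nat_eq_0_iff_kernel:
  "det_nat k A = 0 \<longleftrightarrow> (\<exists>\<alpha>. (\<exists>t<k. \<alpha> t \<noteq> 0) \<and> (\<forall>s<k. (\<Sum>t<k. A s t * \<alpha> t) = 0))"
proof -
  let ?M = "mat k k (\<lambda>(s, t). A s t)"
  have mult: "(?M *\<^sub>v v) $ s = (\<Sum>t<k. A s t * v $ t)" if "v \<in> carrier_vec k" "s < k" for v s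
    using that by (simp add: mult_mat_vec_def scalar_prod_def atLeast0LessThan)
  have "det_nat k A = 0 \<longleftrightarrow> (\<exists>v. v \<in> carrier_vec k \<and> v \<noteq> 0\<^sub>v k \<and> ?M *\<^sub>v v = 0\<^sub>v k)"
    unfolding det_nat_eq_det by (rule det_0_iff_vec_prod_zero) simp
  also have "\<dots> \<longleftrightarrow> (\<exists>\<alpha>. (\<exists>t<k. \<alpha> t \<noteq> 0) \<and> (\<forall>s<k. (\<Sum>t<k. A s t * \<alpha> t) = 0))"
  proof safe
    fix v :: "real vec" assume v: "v \<in> carrier_vec k" "v \<noteq> 0\<^sub>v k" "?M *\<^sub>v v = 0\<^sub>v k"
    then have "\<exists>t<k. v $ t \<noteq> 0" by (metis carrier_vecD eq_vecI index_zero_vec)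
    moreover have "\<forall>s<k. (\<Sum>t<k. A s t * v $ t) = 0"
      using v(3) mult[OF v(1)] by (metis index_zero_vec(1))
    ultimately show "\<exists>\<alpha>. (\<exists>t<k. \<alpha> t \<noteq> 0) \<and> (\<forall>s<k. (\<Sum>t<k. A s t * \<alpha> t) = 0)" by blast
  next
    fix \<alpha> t assume "t < k" "\<alpha> t \<noteq> 0" "\<forall>s<k. (\<Sum>t<k. A s t * \<alpha> t) = 0"
    moreover have "?M *\<^sub>v vec k \<alpha> = 0\<^sub>v k"
      using calculation(3)
      by (intro eq_vecI) (auto simp: mult_mat_vec_def scalar_prod_def atLeast0LessThan)
    moreover have "vec k \<alpha> \<noteq> 0\<^sub>v k"
      using calculation(1,2) by (metis index_vec index_zero_vec(1))
    ultimately show "\<exists>v. v \<in> carrier_vec k \<and> v \<noteq> 0\<^sub>v k \<and> ?M *\<^sub>v v = 0\<^sub>v k"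
      using vec_carrier by blast
  qed
  finally show ?thesis .
qed

lemma homogeneous_system_nontrivial_solution:
  fixes A :: "nat \<Rightarrow> nat \<Rightarrow> real"
  shows "\<exists>\<alpha>. (\<exists>t<k + 1. \<alpha> t \<noteq> 0) \<and> (\<forall>s<k. (\<Sum>t<k + 1. A s t * \<alpha> t) = 0)"
proof -
  have "det_nat (k + 1) (\<lambda>s t. if s < k then A s t else 0) = 0"
    by (rule det_nat_zero_row[of k]) auto
  then obtain \<alpha> where nonzero: "\<exists>t<k + 1. \<alpha> t \<noteq> 0"
    and kernel: "\<forall>s<k + 1. (\<Sum>t<k + 1. (if s < k then A s t else 0) * \<alpha> t) = 0"
    unfolding det_nat_eq_0_iff_kernel by blast
  have "(\<Sum>t<k + 1. A s t * \<alpha> t) = 0" if "s < k" for s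
    using kernel[rule_format, of s] that by simp
  with nonzero show ?thesis by blast
qed

lemma mem_W0_iff:
  fixes x :: "nat \<Rightarrow> 'a::euclidean_space"
  shows "w \<in> W0 n x \<longleftrightarrow>
    (\<forall>i\<ge>n. w i = 0) \<and> (\<Sum>i<n. w i) = 0 \<and> (\<Sum>i<n. w i *\<^sub>R x i) = 0"
proof -
  have expand: "(\<Sum>i<n. w i *\<^sub>R (x i - p)) = (\<Sum>i<n. w i *\<^sub>R x i) - (\<Sum>i<n. w i) *\<^sub>R p" for p
    by (simp add: scaleR_diff_right sum_subtractf scaleR_sum_left)
  obtain b :: 'a where "b \<in> Basis" using nonempty_Basis by blast
  then have "b \<noteq> 0" by auto
  have "(\<forall>p. (\<Sum>i<n. w i *\<^sub>R (x i - p)) = 0) \<longleftrightarrow>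
      (\<Sum>i<n. w i) = 0 \<and> (\<Sum>i<n. w i *\<^sub>R x i) = 0"
  proof
    assume all: "\<forall>p. (\<Sum>i<n. w i *\<^sub>R (x i - p)) = 0"
    have "(\<Sum>i<n. w i *\<^sub>R x i) = 0" using all[rule_format, of 0] by simp
    moreover have "(\<Sum>i<n. w i) *\<^sub>R b = 0"
      using all[rule_format, of b] calculation unfolding expand by simp
    ultimately show "(\<Sum>i<n. w i) = 0 \<and> (\<Sum>i<n. w i *\<^sub>R x i) = 0"
      using \<open>b \<noteq> 0\<close> by simp
  qed (simp add: expand)
  then show ?thesis unfolding W0_def by blast
qed

lemma W0_lincomb:
  fixes x :: "nat \<Rightarrow> 'a::euclidean_space"
  assumes "\<forall>t<K. v t \<in> W0 n x"
  shows "(\<lambda>i. \<Sum>t<K. \<alpha> t * v t i) \<in> W0 n x"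
  unfolding mem_W0_iff
proof (intro conjI)
  show "\<forall>i\<ge>n. (\<Sum>t<K. \<alpha> t * v t i) = 0"
    using assms by (simp add: mem_W0_iff)
  have "(\<Sum>i<n. \<Sum>t<K. \<alpha> t * v t i) = (\<Sum>t<K. \<alpha> t * (\<Sum>i<n. v t i))"
    by (subst sum.swap) (simp add: sum_distrib_left)
  also have "\<dots> = 0" using assms by (simp add: mem_W0_iff)
  finally show "(\<Sum>i<n. \<Sum>t<K. \<alpha> t * v t i) = 0" .
  have "(\<Sum>i<n. (\<Sum>t<K. \<alpha> t * v t i) *\<^sub>R x i) = (\<Sum>t<K. \<alpha> t *\<^sub>R (\<Sum>i<n. v t i *\<^sub>R x i))"
    unfolding scaleR_sum_left scaleR_sum_right scaleR_scaleR by (rule sum.swap)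
  also have "\<dots> = 0" using assms by (simp add: mem_W0_iff)
  finally show "(\<Sum>i<n. (\<Sum>t<K. \<alpha> t * v t i) *\<^sub>R x i) = 0" .
qed

lemma W0_eq_0_if_supported_on_affine_independent:
  fixes x :: "nat \<Rightarrow> 'a::euclidean_space"
  assumes w: "w \<in> W0 n x" and inj: "inj_on x I" and I: "I \<subseteq> {..<n}"
    and indep: "\<not> affine_dependent (x ` I)"
    and support: "\<forall>i\<in>{..<n} - I. w i = 0"
  shows "w i = 0"
proof -
  have "finite I" using I finite_subset by blast
  define u where "u y = w (inv_into I x y)" for y
  have u: "u (x i) = w i" if "i \<in> I" for i unfolding u_def using inj that by simp
  have "(\<Sum>i<n. w i) = (\<Sum>i\<in>I. w i)" "(\<Sum>i<n. w i *\<^sub>R x i) = (\<Sum>i\<in>I. w i *\<^sub>R x i)"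
    using support I by (auto intro: sum.mono_neutral_right)
  then have "sum u (x ` I) = 0" "(\<Sum>y\<in>x ` I. u y *\<^sub>R y) = 0"
    using w inj u by (simp_all add: mem_W0_iff sum.reindex)
  then have "\<forall>y\<in>x ` I. u y = 0"
    using indep \<open>finite I\<close> affine_dependent_explicit_finite[of "x ` I"] by blast
  then show "w i = 0"
    using u support w by (cases "i < n") (auto simp: mem_W0_iff)
qed

lemma affine_basis_complement_card:
  fixes x :: "nat \<Rightarrow> 'a::euclidean_space"
  assumes inj: "inj_on x {..<n}"
    and codim: "int c = int n - 1 - aff_dim (x ` {..<n})"
  obtains I where "I \<subseteq> {..<n}" "\<not> affine_dependent (x ` I)" "card ({..<n} - I) = c"
proof -
  obtain B where B: "B \<subseteq> x ` {..<n}" "\<not> affine_dependent B"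
    "affine hull (x ` {..<n}) = affine hull B"
    using affine_basis_exists by blast
  define I where "I = {i\<in>{..<n}. x i \<in> B}"
  have I: "I \<subseteq> {..<n}" and xI: "x ` I = B" using B(1) unfolding I_def by auto
  have "card I = card B" using card_image[OF inj_on_subset[OF inj I]] xI by simp
  moreover have "aff_dim (x ` {..<n}) = aff_dim B" using B(3) by (metis aff_dim_affine_hull)
  then have "int (card B) = aff_dim (x ` {..<n}) + 1"
    using aff_dim_affine_independent[OF B(2)] by simp
  moreover have "card ({..<n} - I) = n - card I" "card I \<le> n"
    using I card_mono[OF finite_lessThan I] by (simp_all add: card_Diff_subset finite_subset)
  ultimately have "card ({..<n} - I) = c" using codim by linarith
  with I xI B(2) show thesis by (intro that) auto
qed

lemma W0_linearly_dependent:
  fixes x :: "nat \<Rightarrow> 'a::euclidean_space"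
  assumes inj: "inj_on x {..<n}"
    and codim: "int c = int n - 1 - aff_dim (x ` {..<n})"
    and v: "\<forall>t<c + 1. v t \<in> W0 n x"
  shows "\<exists>\<alpha>. (\<exists>t<c + 1. \<alpha> t \<noteq> 0) \<and> (\<forall>i. (\<Sum>t<c + 1. \<alpha> t * v t i) = 0)"
proof -
  obtain I where I: "I \<subseteq> {..<n}" "\<not> affine_dependent (x ` I)" "card ({..<n} - I) = c"
    using affine_basis_complement_card[OF inj codim] .
  then obtain h where h: "bij_betw h {0..<c} ({..<n} - I)"
    using ex_bij_betw_nat_finite[of "{..<n} - I"] by auto
  obtain \<alpha> where nonzero: "\<exists>t<c + 1. \<alpha> t \<noteq> 0"
    and kernel: "\<forall>s<c. (\<Sum>t<c + 1. v t (h s) * \<alpha> t) = 0"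
    using homogeneous_system_nontrivial_solution[of c "\<lambda>s t. v t (h s)"] by blast
  define w where "w i = (\<Sum>t<c + 1. \<alpha> t * v t i)" for i
  have w: "w \<in> W0 n x" unfolding w_def using v by (rule W0_lincomb)
  have support: "\<forall>i\<in>{..<n} - I. w i = 0"
  proof
    fix i assume "i \<in> {..<n} - I"
    then have "i \<in> h ` {0..<c}" using h by (simp add: bij_betw_def)
    then obtain s where "s \<in> {0..<c}" "i = h s" by (rule imageE)
    then show "w i = 0" using kernel unfolding w_def by (simp add: mult.commute)
  qed
  have "w i = 0" for i
    using w inj_on_subset[OF inj I(1)] I(1,2) support
    by (rule W0_eq_0_if_supported_on_affine_independent)
  with nonzero show ?thesis unfolding w_def by blast
qed

lemma det_nat_W0_columns_eq_0:
  fixes x :: "nat \<Rightarrow> 'a::euclidean_space"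
  assumes "inj_on x {..<n}"
    and "int c = int n - 1 - aff_dim (x ` {..<n})"
    and "\<forall>t<c + 1. v t \<in> W0 n x"
  shows "det_nat (c + 1) (\<lambda>s t. v t (rs s)) = 0"
proof -
  obtain \<alpha> where "\<exists>t<c + 1. \<alpha> t \<noteq> 0" "\<forall>i. (\<Sum>t<c + 1. \<alpha> t * v t i) = 0"
    using W0_linearly_dependent[OF assms] by blast
  then show ?thesis
    unfolding det_nat_eq_0_iff_kernel by (intro exI[of _ \<alpha>]) (simp add: mult.commute)
qed

lemma Cvec_in_W0:
  fixes x :: "nat \<Rightarrow> 'a::euclidean_space"
  assumes j: "j < n" and "m j \<noteq> 0"
    and balance: "(\<Sum>i\<in>{..<n} - {j}. (m i * Soff n x m a lam i j) *\<^sub>R (x i - x j)) = 0"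
  shows "(\<lambda>i. if i < n then Cvec n x m a lam j i else 0) \<in> W0 n x"
proof -
  let ?C = "\<lambda>i. if i < n then Cvec n x m a lam j i else 0"
  have off_diagonal: "Cvec n x m a lam j i = m i * Soff n x m a lam i j" if "i \<noteq> j" for i
    using that by (simp add: Cvec_def Smat_def)
  have "(\<Sum>i<n. ?C i) = Cvec n x m a lam j j + (\<Sum>i\<in>{..<n} - {j}. m i * Soff n x m a lam i j)"
    using j by (simp add: sum.remove off_diagonal)
  also have "\<dots> = 0" using \<open>m j \<noteq> 0\<close> by (simp add: Cvec_def Smat_def)
  finally have mass: "(\<Sum>i<n. ?C i) = 0" .
  have "(\<Sum>i<n. ?C i *\<^sub>R (x i - x j)) = 0"
    using j balance by (simp add: sum.remove off_diagonal)
  moreover have "(\<Sum>i<n. ?C i *\<^sub>R x i) = (\<Sum>i<n. ?C i *\<^sub>R (x i - x j)) + (\<Sum>i<n. ?C i) *\<^sub>R x j"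
    by (simp add: scaleR_diff_right sum_subtractf scaleR_sum_left)
  ultimately show ?thesis using mass by (simp add: mem_W0_iff)
qed

lemma det_nat_Cvec_W0_minor_eq_0:
  fixes x :: "nat \<Rightarrow> 'a::euclidean_space"
  assumes inj: "inj_on x {..<n}"
    and codim: "int c = int n - 1 - aff_dim (x ` {..<n})"
    and masses: "\<forall>i<n. m i \<noteq> 0"
    and lam: "\<forall>j<n. (\<Sum>i\<in>{..<n} - {j}. (m i * Soff n x m a lam i j) *\<^sub>R (x i - x j)) = 0"
    and kl: "k + l = c + 1" and js: "\<forall>t<k. js t < n" and ws: "\<forall>t<l. ws t \<in> W0 n x"
    and rs: "\<forall>s<c + 1. rs s < n"
  shows "det_nat (c + 1)
    (\<lambda>s t. if t < k then Cvec n x m a lam (js t) (rs s) else ws (t - k) (rs s)) = 0"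
proof -
  define v where "v t = (if t < k then (\<lambda>i. if i < n then Cvec n x m a lam (js t) i else 0)
    else ws (t - k))" for t
  have "v t \<in> W0 n x" if "t < c + 1" for t
  proof (cases "t < k")
    case True
    then have "js t < n" using js by blast
    then show ?thesis using Cvec_in_W0[of "js t" n m x a lam] masses lam True by (simp add: v_def)
  next
    case False
    then show ?thesis using ws that kl by (simp add: v_def)
  qed
  then have "det_nat (c + 1) (\<lambda>s t. v t (rs s)) = 0"
    using inj codim by (intro det_nat_W0_columns_eq_0) auto
  moreover have "det_nat (c + 1) (\<lambda>s t. v t (rs s)) = det_nat (c + 1)
      (\<lambda>s t. if t < k then Cvec n x m a lam (js t) (rs s) else ws (t - k) (rs s))"
    using rs by (intro det_nat_cong) (simp add: v_def)
  ultimately show ?thesis by simp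
qed

lemma det_nat_Smat_minor_eq_0:
  fixes x :: "nat \<Rightarrow> 'a::euclidean_space"
  assumes inj: "inj_on x {..<n}"
    and codim: "int c = int n - 1 - aff_dim (x ` {..<n})"
    and masses: "\<forall>i<n. m i \<noteq> 0"
    and lam: "\<forall>j<n. (\<Sum>i\<in>{..<n} - {j}. (m i * Soff n x m a lam i j) *\<^sub>R (x i - x j)) = 0"
    and rs: "\<forall>s<c + 1. rs s < n" and cs: "\<forall>t<c + 1. cs t < n"
  shows "det_nat (c + 1) (\<lambda>s t. Smat n x m a lam (rs s) (cs t)) = 0"
proof -
  let ?C = "\<lambda>s t. if t < c + 1 then Cvec n x m a lam (cs t) (rs s) else 0"
  have "det_nat (c + 1) (\<lambda>s t. Smat n x m a lam (rs s) (cs t))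
      = det_nat (c + 1) (\<lambda>s t. inverse (m (rs s)) * ?C s t)"
    using masses rs by (intro det_nat_cong) (simp add: Cvec_def)
  also have "\<dots> = (\<Prod>s<c + 1. inverse (m (rs s))) * det_nat (c + 1) ?C"
    by (rule det_nat_scale_rows)
  also have "det_nat (c + 1) ?C = 0"
    using det_nat_Cvec_W0_minor_eq_0[OF inj codim masses lam, of "c + 1" 0 cs "\<lambda>_ _. 0" rs] cs rs
    by simp
  finally show ?thesis by simp
qed

theorem mainTheorem16:
  fixes x :: "nat \<Rightarrow> 'a::euclidean_space" and m :: "nat \<Rightarrow> real"
    and n c :: nat and a lam :: real
  assumes distinct: "inj_on x {..<n}"
    and masses: "\<forall>i<n. m i \<noteq> 0"
    and a_nz: "a \<noteq> 0"
    and mu0: "total_mass n m \<noteq> 0"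
    and cc: "central_config n x m a"
    and codim: "int c = int n - 1 - aff_dim (x ` {..<n})"
    and lam: "\<forall>j<n. (\<Sum>i\<in>{..<n} - {j}. (m i * Soff n x m a lam i j) *\<^sub>R (x i - x j)) = 0"
  shows "(\<forall>k l (js :: nat \<Rightarrow> nat) (ws :: nat \<Rightarrow> nat \<Rightarrow> real) (rs :: nat \<Rightarrow> nat).
            k + l = c + 1 \<longrightarrow> (\<forall>t<k. js t < n) \<longrightarrow> (\<forall>t<l. ws t \<in> W0 n x) \<longrightarrow>
            strict_mono_on {..<c+1} rs \<longrightarrow> (\<forall>s<c+1. rs s < n) \<longrightarrow>
            det_nat (c+1) (\<lambda>s t. if t < k then Cvec n x m a lam (js t) (rs s)
                                 else ws (t - k) (rs s)) = 0)
       \<and> (\<forall>(rs :: nat \<Rightarrow> nat) (cs :: nat \<Rightarrow> nat).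
            strict_mono_on {..<c+1} rs \<longrightarrow> (\<forall>s<c+1. rs s < n) \<longrightarrow>
            strict_mono_on {..<c+1} cs \<longrightarrow> (\<forall>t<c+1. cs t < n) \<longrightarrow>
            det_nat (c+1) (\<lambda>s t. Smat n x m a lam (rs s) (cs t)) = 0)"
  using det_nat_Cvec_W0_minor_eq_0[OF distinct codim masses lam]
    det_nat_Smat_minor_eq_0[OF distinct codim masses lam]
  by blast

end
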